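(* Let $\langle U,B\rangle$ be a 3-frame (i.e. $U\neq\emptyset$ and $B\subseteq U^3$), and define for $X,Y\subseteq U$ $\langle B\rangle(X,Y)=\{u\in U\mid \exists x\in X\,\exists y\in Y\, B(x,u,y)\}$ and $[\![B]\!](X,Y)=\{u\in U\mid \forall x\in X\,\forall y\in Y\, B(x,u,y)\}$. Then: (i) $B(a,a,a)$ for all $a\in U$ iff $X\subseteq\langle B\rangle(X,X)$ for all $X\subseteq U$; (ii) ($B(a,b,c)\Rightarrow B(c,b,a)$ for all $a,b,c$) iff $\langle B\rangle(X,Y)\subseteq\langle B\rangle(Y,X)$ for all $X,Y\subseteq U$; (iii) ($B(a,b,c)\Rightarrow B(c,b,a)$ for all $a,b,c$) iff $[\![B]\!](X,Y)\subseteq[\![B]\!](Y,X)$ for all $X,Y\subseteq U$; (iv) ($B(a,b,c)\Rightarrow B(a,a,b)$ for all $a,b,c$) iff $Y\cap\langle B\rangle(X,Z)\subseteq\langle B\rangle(X\cap\langle B\rangle(X,Y),Z)$ for all $X,Y,Z\subseteq U$; (v) ($B(a,b,c)\wedge B(a,c,b)\Rightarrow b=c$ for all $a,b,c$) iff $\langle B\rangle\big(X,[\![B]\!](X,U\setminus Y)\cap Y\big)\subseteq Y$ for all $X,Y\subseteq U$; (vi) ($B(a,b,a)\Rightarrow a=b$ for all $a,b$) iff $[\![B]\!](X,X)\subseteq X$ for all non-empty $X\subseteq U$; (vii) ($B(a,a,b)$ for all $a,b$) iff $X\subseteq\langle B\rangle(X,Y)$ for all $X\subseteq U$ and all non-empty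 $Y\subseteq U$. *)

theory Defs
  imports Main
begin

definition frame3 :: "'a set \<Rightarrow> ('a \<Rightarrow> 'a \<Rightarrow> 'a \<Rightarrow> bool) \<Rightarrow> bool" where
  "frame3 U B \<longleftrightarrow> U \<noteq> {} \<and> (\<forall>x y z. B x y z \<longrightarrow> x \<in> U \<and> y \<in> U \<and> z \<in> U)"

definition dia :: "'a set \<Rightarrow> ('a \<Rightarrow> 'a \<Rightarrow> 'a \<Rightarrow> bool) \<Rightarrow> 'a set \<Rightarrow> 'a set \<Rightarrow> 'a set" where
  "dia U B X Y = {u \<in> U. \<exists>x\<in>X. \<exists>y\<in>Y. B x u y}"

definition box :: "'a set \<Rightarrow> ('a \<Rightarrow> 'a \<Rightarrow> 'a \<Rightarrow> bool) \<Rightarrow> 'a set \<Rightarrow> 'a set \<Rightarrow> 'a set" where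
  "box U B X Y = {u \<in> U. \<forall>x\<in>X. \<forall>y\<in>Y. B x u y}"

end

theory Submission
  imports Defs
begin

text \<open>Each inclusion between the operators is checked pointwise in one direction; for the
converse it is instantiated at singletons (for (v): at \<open>{a}\<close> and \<open>U - {b}\<close>), where the
operators reduce to B itself.\<close>

lemma diaI: "u \<in> U \<Longrightarrow> x \<in> X \<Longrightarrow> y \<in> Y \<Longrightarrow> B x u y \<Longrightarrow> u \<in> dia U B X Y"
  by (auto simp: dia_def)

lemma mem_dia_singletons: "b \<in> dia U B {a} {c} \<longleftrightarrow> b \<in> U \<and> B a b c"
  by (auto simp: dia_def)

lemma mem_box_singletons: "b \<in> box U B {a} {c} \<longleftrightarrow> b \<in> U \<and> B a b c"
  by (auto simp: box_def)

lemma refl_iff_subset_dia_diag: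
  "(\<forall>a\<in>U. B a a a) \<longleftrightarrow> (\<forall>X. X \<subseteq> U \<longrightarrow> X \<subseteq> dia U B X X)"
proof
  assume "\<forall>a\<in>U. B a a a"
  then show "\<forall>X. X \<subseteq> U \<longrightarrow> X \<subseteq> dia U B X X"
    by (auto simp: dia_def)
next
  assume incl: "\<forall>X. X \<subseteq> U \<longrightarrow> X \<subseteq> dia U B X X"
  show "\<forall>a\<in>U. B a a a"
  proof
    fix a
    assume "a \<in> U"
    with incl[rule_format, of "{a}"] show "B a a a"
      by (simp add: mem_dia_singletons)
  qed
qed

lemma sym_iff_dia_commute:
  "(\<forall>a\<in>U. \<forall>b\<in>U. \<forall>c\<in>U. B a b c \<longrightarrow> B c b a) \<longleftrightarrow>
   (\<forall>X Y. X \<subseteq> U \<longrightarrow> Y \<subseteq> U \<longrightarrow> dia U B X Y \<subseteq> dia U B Y X)"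
proof
  assume "\<forall>a\<in>U. \<forall>b\<in>U. \<forall>c\<in>U. B a b c \<longrightarrow> B c b a"
  then show "\<forall>X Y. X \<subseteq> U \<longrightarrow> Y \<subseteq> U \<longrightarrow> dia U B X Y \<subseteq> dia U B Y X"
    unfolding dia_def by blast
next
  assume incl: "\<forall>X Y. X \<subseteq> U \<longrightarrow> Y \<subseteq> U \<longrightarrow> dia U B X Y \<subseteq> dia U B Y X"
  show "\<forall>a\<in>U. \<forall>b\<in>U. \<forall>c\<in>U. B a b c \<longrightarrow> B c b a"
  proof (intro ballI impI)
    fix a b c
    assume "a \<in> U" "b \<in> U" "c \<in> U" "B a b c"
    with incl[rule_format, of "{a}" "{c}"] show "B c b a"
      by (auto simp: mem_dia_singletons)
  qed
qed

lemma sym_iff_box_commute: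
  "(\<forall>a\<in>U. \<forall>b\<in>U. \<forall>c\<in>U. B a b c \<longrightarrow> B c b a) \<longleftrightarrow>
   (\<forall>X Y. X \<subseteq> U \<longrightarrow> Y \<subseteq> U \<longrightarrow> box U B X Y \<subseteq> box U B Y X)"
proof
  assume "\<forall>a\<in>U. \<forall>b\<in>U. \<forall>c\<in>U. B a b c \<longrightarrow> B c b a"
  then show "\<forall>X Y. X \<subseteq> U \<longrightarrow> Y \<subseteq> U \<longrightarrow> box U B X Y \<subseteq> box U B Y X"
    unfolding box_def by blast
next
  assume incl: "\<forall>X Y. X \<subseteq> U \<longrightarrow> Y \<subseteq> U \<longrightarrow> box U B X Y \<subseteq> box U B Y X"
  show "\<forall>a\<in>U. \<forall>b\<in>U. \<forall>c\<in>U. B a b c \<longrightarrow> B c b a"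
  proof (intro ballI impI)
    fix a b c
    assume "a \<in> U" "b \<in> U" "c \<in> U" "B a b c"
    with incl[rule_format, of "{a}" "{c}"] show "B c b a"
      by (auto simp: mem_box_singletons)
  qed
qed

lemma left_collapse_iff_dia_restrict:
  "(\<forall>a\<in>U. \<forall>b\<in>U. \<forall>c\<in>U. B a b c \<longrightarrow> B a a b) \<longleftrightarrow>
   (\<forall>X Y Z. X \<subseteq> U \<longrightarrow> Y \<subseteq> U \<longrightarrow> Z \<subseteq> U \<longrightarrow>
      Y \<inter> dia U B X Z \<subseteq> dia U B (X \<inter> dia U B X Y) Z)"
proof
  assume collapse: "\<forall>a\<in>U. \<forall>b\<in>U. \<forall>c\<in>U. B a b c \<longrightarrow> B a a b"
  show "\<forall>X Y Z. X \<subseteq> U \<longrightarrow> Y \<subseteq> U \<longrightarrow> Z \<subseteq> U \<longrightarrow>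
      Y \<inter> dia U B X Z \<subseteq> dia U B (X \<inter> dia U B X Y) Z"
  proof (intro allI impI subsetI)
    fix X Y Z u
    assume "X \<subseteq> U" "Z \<subseteq> U" "u \<in> Y \<inter> dia U B X Z"
    then obtain x z where "u \<in> Y" "u \<in> U" "x \<in> X" "x \<in> U" "z \<in> Z" "z \<in> U" "B x u z"
      by (auto simp: dia_def)
    with collapse have "B x x u" by blast
    with \<open>x \<in> X\<close> \<open>x \<in> U\<close> \<open>u \<in> Y\<close> have "x \<in> X \<inter> dia U B X Y"
      by (blast intro: diaI)
    with \<open>u \<in> U\<close> \<open>z \<in> Z\<close> \<open>B x u z\<close> show "u \<in> dia U B (X \<inter> dia U B X Y) Z"
      by (blast intro: diaI)
  qed
next
  assume incl: "\<forall>X Y Z. X \<subseteq> U \<longrightarrow> Y \<subseteq> U \<longrightarrow> Z \<subseteq> U \<longrightarrow>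
      Y \<inter> dia U B X Z \<subseteq> dia U B (X \<inter> dia U B X Y) Z"
  show "\<forall>a\<in>U. \<forall>b\<in>U. \<forall>c\<in>U. B a b c \<longrightarrow> B a a b"
  proof (intro ballI impI)
    fix a b c
    assume "a \<in> U" "b \<in> U" "c \<in> U" "B a b c"
    with incl[rule_format, of "{a}" "{b}" "{c}"] show "B a a b"
      by (auto simp: dia_def)
  qed
qed

lemma right_antisym_iff_dia_box_compl:
  "(\<forall>a\<in>U. \<forall>b\<in>U. \<forall>c\<in>U. B a b c \<and> B a c b \<longrightarrow> b = c) \<longleftrightarrow>
   (\<forall>X Y. X \<subseteq> U \<longrightarrow> Y \<subseteq> U \<longrightarrow> dia U B X (box U B X (U - Y) \<inter> Y) \<subseteq> Y)"
proof
  assume antisym: "\<forall>a\<in>U. \<forall>b\<in>U. \<forall>c\<in>U. B a b c \<and> B a c b \<longrightarrow> b = c"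
  show "\<forall>X Y. X \<subseteq> U \<longrightarrow> Y \<subseteq> U \<longrightarrow> dia U B X (box U B X (U - Y) \<inter> Y) \<subseteq> Y"
  proof (intro allI impI subsetI)
    fix X Y u
    assume "X \<subseteq> U" "Y \<subseteq> U" "u \<in> dia U B X (box U B X (U - Y) \<inter> Y)"
    then obtain x y where "u \<in> U" "x \<in> X" "x \<in> U" "y \<in> Y" "y \<in> U" "B x u y"
      and y_box: "\<forall>w\<in>U - Y. B x y w"
      by (auto simp: dia_def box_def)
    show "u \<in> Y"
    proof (rule ccontr)
      assume "u \<notin> Y"
      with y_box \<open>u \<in> U\<close> have "B x y u" by blast
      with antisym \<open>B x u y\<close> \<open>x \<in> U\<close> \<open>u \<in> U\<close> \<open>y \<in> U\<close> have "u = y" by blast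
      with \<open>u \<notin> Y\<close> \<open>y \<in> Y\<close> show False by simp
    qed
  qed
next
  assume incl: "\<forall>X Y. X \<subseteq> U \<longrightarrow> Y \<subseteq> U \<longrightarrow> dia U B X (box U B X (U - Y) \<inter> Y) \<subseteq> Y"
  show "\<forall>a\<in>U. \<forall>b\<in>U. \<forall>c\<in>U. B a b c \<and> B a c b \<longrightarrow> b = c"
  proof (intro ballI impI, elim conjE)
    fix a b c
    assume "a \<in> U" "b \<in> U" "c \<in> U" and Babc: "B a b c" and Bacb: "B a c b"
    show "b = c"
    proof (rule ccontr)
      assume "b \<noteq> c"
      with Bacb \<open>b \<in> U\<close> \<open>c \<in> U\<close> have "c \<in> box U B {a} (U - (U - {b})) \<inter> (U - {b})"
        by (auto simp: box_def)
      with Babc \<open>b \<in> U\<close> have "b \<in> dia U B {a} (box U B {a} (U - (U - {b})) \<inter> (U - {b}))"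
        by (auto simp: dia_def)
      with incl \<open>a \<in> U\<close> have "b \<in> U - {b}" by blast
      then show False by simp
    qed
  qed
qed

lemma outer_diag_trivial_iff_box_diag_subset:
  "(\<forall>a\<in>U. \<forall>b\<in>U. B a b a \<longrightarrow> a = b) \<longleftrightarrow>
   (\<forall>X. X \<subseteq> U \<longrightarrow> X \<noteq> {} \<longrightarrow> box U B X X \<subseteq> X)"
proof
  assume "\<forall>a\<in>U. \<forall>b\<in>U. B a b a \<longrightarrow> a = b"
  then show "\<forall>X. X \<subseteq> U \<longrightarrow> X \<noteq> {} \<longrightarrow> box U B X X \<subseteq> X"
    unfolding box_def by blast
next
  assume incl: "\<forall>X. X \<subseteq> U \<longrightarrow> X \<noteq> {} \<longrightarrow> box U B X X \<subseteq> X"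
  show "\<forall>a\<in>U. \<forall>b\<in>U. B a b a \<longrightarrow> a = b"
  proof (intro ballI impI)
    fix a b
    assume "a \<in> U" "b \<in> U" "B a b a"
    with incl[rule_format, of "{a}"] show "a = b"
      by (auto simp: mem_box_singletons)
  qed
qed

lemma left_refl_iff_subset_dia:
  "(\<forall>a\<in>U. \<forall>b\<in>U. B a a b) \<longleftrightarrow>
   (\<forall>X Y. X \<subseteq> U \<longrightarrow> Y \<subseteq> U \<longrightarrow> Y \<noteq> {} \<longrightarrow> X \<subseteq> dia U B X Y)"
proof
  assume "\<forall>a\<in>U. \<forall>b\<in>U. B a a b"
  then show "\<forall>X Y. X \<subseteq> U \<longrightarrow> Y \<subseteq> U \<longrightarrow> Y \<noteq> {} \<longrightarrow> X \<subseteq> dia U B X Y"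
    unfolding dia_def by blast
next
  assume incl: "\<forall>X Y. X \<subseteq> U \<longrightarrow> Y \<subseteq> U \<longrightarrow> Y \<noteq> {} \<longrightarrow> X \<subseteq> dia U B X Y"
  show "\<forall>a\<in>U. \<forall>b\<in>U. B a a b"
  proof (intro ballI)
    fix a b
    assume "a \<in> U" "b \<in> U"
    with incl[rule_format, of "{a}" "{b}"] show "B a a b"
      by (simp add: mem_dia_singletons)
  qed
qed

theorem theorem20:
  fixes U :: "'a set" and B :: "'a \<Rightarrow> 'a \<Rightarrow> 'a \<Rightarrow> bool"
  assumes "frame3 U B"
  shows
   "((\<forall>a\<in>U. B a a a) \<longleftrightarrow> (\<forall>X. X \<subseteq> U \<longrightarrow> X \<subseteq> dia U B X X))
  \<and> ((\<forall>a\<in>U. \<forall>b\<in>U. \<forall>c\<in>U. B a b c \<longrightarrow> B c b a) \<longleftrightarrow>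
       (\<forall>X Y. X \<subseteq> U \<longrightarrow> Y \<subseteq> U \<longrightarrow> dia U B X Y \<subseteq> dia U B Y X))
  \<and> ((\<forall>a\<in>U. \<forall>b\<in>U. \<forall>c\<in>U. B a b c \<longrightarrow> B c b a) \<longleftrightarrow>
       (\<forall>X Y. X \<subseteq> U \<longrightarrow> Y \<subseteq> U \<longrightarrow> box U B X Y \<subseteq> box U B Y X))
  \<and> ((\<forall>a\<in>U. \<forall>b\<in>U. \<forall>c\<in>U. B a b c \<longrightarrow> B a a b) \<longleftrightarrow>
       (\<forall>X Y Z. X \<subseteq> U \<longrightarrow> Y \<subseteq> U \<longrightarrow> Z \<subseteq> U \<longrightarrow>
          Y \<inter> dia U B X Z \<subseteq> dia U B (X \<inter> dia U B X Y) Z))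
  \<and> ((\<forall>a\<in>U. \<forall>b\<in>U. \<forall>c\<in>U. B a b c \<and> B a c b \<longrightarrow> b = c) \<longleftrightarrow>
       (\<forall>X Y. X \<subseteq> U \<longrightarrow> Y \<subseteq> U \<longrightarrow>
          dia U B X (box U B X (U - Y) \<inter> Y) \<subseteq> Y))
  \<and> ((\<forall>a\<in>U. \<forall>b\<in>U. B a b a \<longrightarrow> a = b) \<longleftrightarrow>
       (\<forall>X. X \<subseteq> U \<longrightarrow> X \<noteq> {} \<longrightarrow> box U B X X \<subseteq> X))
  \<and> ((\<forall>a\<in>U. \<forall>b\<in>U. B a a b) \<longleftrightarrow>
       (\<forall>X Y. X \<subseteq> U \<longrightarrow> Y \<subseteq> U \<longrightarrow> Y \<noteq> {} \<longrightarrow> X \<subseteq> dia U B X Y))"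
  by (intro conjI refl_iff_subset_dia_diag sym_iff_dia_commute sym_iff_box_commute
      left_collapse_iff_dia_restrict right_antisym_iff_dia_box_compl
      outer_diag_trivial_iff_box_diag_subset left_refl_iff_subset_dia)

end
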